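(* Let $(\mathcal A,\mathcal B,\mathcal C)$ be a generic triple of flags in an $m$-dimensional $R$-vector space $V$. For integers $a,b,c\ge1$ with $a+b+c=m+2$, the space $\mathcal A^{a-1}\cap\mathcal B^{b-1}\cap\mathcal C^{c-1}$ is a line, and the compositions of its inclusion with the projections give isomorphisms onto $\mathrm{gr}^a\mathcal A$, $\mathrm{gr}^b\mathcal B$, $\mathrm{gr}^c\mathcal C$; composing the inverse of one of these with another yields canonical isomorphisms between any two of $\mathrm{gr}^a\mathcal A,\mathrm{gr}^b\mathcal B,\mathrm{gr}^c\mathcal C$. Then: (1) for any $a,b,c\ge1$ with $a+b+c=m+2$, the composition of the canonical isomorphisms $\mathrm{gr}^a\mathcal A\to\mathrm{gr}^b\mathcal B\to\mathrm{gr}^c\mathcal C\to\mathrm{gr}^a\mathcal A$ is the identity; (2) for any $a,b,c\ge2$ with $a+b+c=m+4$, the composition of the six canonical isomorphisms around the hexagon $$\mathrm{gr}^a\mathcal A\to\mathrm{gr}^{b-1}\mathcal B\to\mathrm{gr}^{c}\mathcal C\to\mathrm{gr}^{a-1}\mathcal A\to\mathrm{gr}^{b}\mathcal B\to\mathrm{gr}^{c-1}\mathcal C\to\mathrm{gr}^a\mathcal A$$ equals $-\mathrm{Id}$.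
   Context: $R$ is a skew field; vector spaces are free left $R$-modules. A flag $\mathcal F$ in $V$ is a filtration $V=\mathcal F^0\supset\dots\supset\mathcal F^m=0$ with $\operatorname{codim}\mathcal F^i=i$, and $\mathrm{gr}^i\mathcal F:=\mathcal F^{i-1}/\mathcal F^i$. A triple of flags is generic if $V\to V/\mathcal A^a\oplus V/\mathcal B^b\oplus V/\mathcal C^c$ is an isomorphism for all $a,b,c\ge0$ with $a+b+c=m$. *)

theory Defs
  imports "HOL-Analysis.Analysis"
begin

text \<open>The ambient space: the free left module R^m over a skew field R, realised as
  'r ^ 'n with 'r :: division_ring, m = CARD('n), and left scalar multiplication *s.\<close>

definition lsubspace :: "('r::division_ring ^ 'n) set \<Rightarrow> bool" where
  "lsubspace W \<longleftrightarrow> 0 \<in> W \<and> (\<forall>x\<in>W. \<forall>y\<in>W. x + y \<in> W) \<and> (\<forall>c. \<forall>x\<in>W. c *s x \<in> W)"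

definition lspan :: "('r::division_ring ^ 'n) set \<Rightarrow> ('r ^ 'n) set" where
  "lspan S = {\<Sum>x\<in>T. f x *s x | T f. finite T \<and> T \<subseteq> S}"

definition lindep_free :: "('r::division_ring ^ 'n) set \<Rightarrow> bool" where
  "lindep_free S \<longleftrightarrow> (\<forall>T f. finite T \<and> T \<subseteq> S \<and> (\<Sum>x\<in>T. f x *s x) = 0 \<longrightarrow> (\<forall>x\<in>T. f x = 0))"

definition lbasis :: "('r::division_ring ^ 'n) set \<Rightarrow> ('r ^ 'n) set \<Rightarrow> bool" where
  "lbasis W B \<longleftrightarrow> B \<subseteq> W \<and> lindep_free B \<and> lspan B = W"

definition ldim :: "('r::division_ring ^ 'n) set \<Rightarrow> nat" where
  "ldim W = card (SOME B. lbasis W B)"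

definition lcodim :: "('r::division_ring ^ 'n::finite) set \<Rightarrow> nat" where
  "lcodim W = CARD('n) - ldim W"

definition is_flag :: "(nat \<Rightarrow> ('r::division_ring ^ 'n::finite) set) \<Rightarrow> bool" where
  "is_flag F \<longleftrightarrow> F 0 = UNIV \<and> F CARD('n) = {0} \<and>
     (\<forall>i\<le>CARD('n). lsubspace (F i) \<and> lcodim (F i) = i) \<and>
     (\<forall>i<CARD('n). F (Suc i) \<subseteq> F i)"

definition coset :: "('r::division_ring ^ 'n) set \<Rightarrow> 'r ^ 'n \<Rightarrow> ('r ^ 'n) set" where
  "coset W x = (\<lambda>w. x + w) ` W"

definition quot :: "('r::division_ring ^ 'n) set \<Rightarrow> ('r ^ 'n) set \<Rightarrow> ('r ^ 'n) set set" where
  "quot U W = coset W ` U"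

definition gr :: "(nat \<Rightarrow> ('r::division_ring ^ 'n) set) \<Rightarrow> nat \<Rightarrow> ('r ^ 'n) set set" where
  "gr F i = quot (F (i - 1)) (F i)"

definition generic_triple ::
  "(nat \<Rightarrow> ('r::division_ring ^ 'n::finite) set) \<Rightarrow> (nat \<Rightarrow> ('r ^ 'n) set) \<Rightarrow> (nat \<Rightarrow> ('r ^ 'n) set) \<Rightarrow> bool" where
  "generic_triple A B C \<longleftrightarrow> is_flag A \<and> is_flag B \<and> is_flag C \<and>
     (\<forall>a b c. a + b + c = CARD('n) \<longrightarrow>
        bij_betw (\<lambda>v. (coset (A a) v, coset (B b) v, coset (C c) v)) UNIV
          (quot UNIV (A a) \<times> quot UNIV (B b) \<times> quot UNIV (C c)))"

definition tline ::
  "(nat \<Rightarrow> ('r::division_ring ^ 'n) set) \<Rightarrow> (nat \<Rightarrow> ('r ^ 'n) set) \<Rightarrow> (nat \<Rightarrow> ('r ^ 'n) set) \<Rightarrow>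
   nat \<Rightarrow> nat \<Rightarrow> nat \<Rightarrow> ('r ^ 'n) set" where
  "tline A B C a b c = A (a - 1) \<inter> B (b - 1) \<inter> C (c - 1)"

definition can_iso ::
  "('r::division_ring ^ 'n) set \<Rightarrow> (nat \<Rightarrow> ('r ^ 'n) set) \<Rightarrow> nat \<Rightarrow> (nat \<Rightarrow> ('r ^ 'n) set) \<Rightarrow> nat \<Rightarrow>
   ('r ^ 'n) set \<Rightarrow> ('r ^ 'n) set" where
  "can_iso L F i G j X = coset (G j) (THE l. l \<in> L \<and> coset (F i) l = X)"

end

(*
  Genericity for a + b + c = m says exactly two things: A^a \<inter> B^b \<inter> C^c = 0, and every triple
  of classes modulo A^a, B^b, C^c has a common representative.  For a + b + c = m + 2 the space
  L = A^(a-1) \<inter> B^(b-1) \<inter> C^(c-1) therefore meets A^a trivially (use the triple (a, b-1, c-1)),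
  and every class of gr^a A has a representative in L; so L \<cong> gr^a A, which is a line because
  A^a has codimension one in A^(a-1).  All canonical isomorphisms through L are induced by the
  identity of L, which gives the triangle.  Around the hexagon, x is lifted successively to
  vectors l1, l2, l3, l4 of the three lines involved; then l1 + l3 - l2 and l4 + l1 lie in triple
  intersections of total codimension m, so both vanish and the hexagon sends x to -x.
*)
theory Submission
  imports Defs
begin

definition span_family :: "('i \<Rightarrow> 'r::division_ring^'n) \<Rightarrow> 'i set \<Rightarrow> ('r^'n) set" where
  "span_family w J = range (\<lambda>f. \<Sum>j\<in>J. f j *s w j)"

definition indep_family :: "('i \<Rightarrow> 'r::division_ring^'n) \<Rightarrow> 'i set \<Rightarrow> bool" where
  "indep_family v I \<longleftrightarrow> (\<forall>g. (\<Sum>i\<in>I. g i *s v i) = 0 \<longrightarrow> (\<forall>i\<in>I. g i = 0))"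

lemma span_familyI: "x = (\<Sum>j\<in>J. f j *s w j) \<Longrightarrow> x \<in> span_family w J"
  unfolding span_family_def by blast

lemma smult_eq_0_iff:
  fixes x :: "'r::division_ring^'n"
  shows "c *s x = 0 \<longleftrightarrow> c = 0 \<or> x = 0"
proof (cases "c = 0")
  case False
  then have "x = inverse c *s (c *s x)" by simp
  then show ?thesis using False by (metis vector_smult_rzero)
qed simp

lemma indep_family_eliminate:
  fixes v :: "'i \<Rightarrow> 'r::division_ring^'n"
  assumes "finite I" "indep_family v I" "i0 \<in> I"
  shows "indep_family (\<lambda>i. v i - d i *s v i0) (I - {i0})"
  unfolding indep_family_def
proof (intro allI impI)
  fix g assume g: "(\<Sum>i\<in>I - {i0}. g i *s (v i - d i *s v i0)) = 0"
  define G where "G i = (if i = i0 then - (\<Sum>k\<in>I - {i0}. g k * d k) else g i)" for i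
  have "(\<Sum>i\<in>I - {i0}. G i *s v i) = (\<Sum>i\<in>I - {i0}. g i *s v i)"
    by (rule sum.cong) (auto simp: G_def)
  then have "(\<Sum>i\<in>I. G i *s v i) = G i0 *s v i0 + (\<Sum>i\<in>I - {i0}. g i *s v i)"
    using assms(1,3) by (simp add: sum.remove)
  also have "\<dots> = (\<Sum>i\<in>I - {i0}. g i *s (v i - d i *s v i0))"
    by (simp add: G_def sum_subtractf vector_smult_lneg sum_distrib_right vec_eq_iff)
  finally have "(\<Sum>i\<in>I. G i *s v i) = 0" using g by simp
  then have "\<forall>i\<in>I. G i = 0" using assms(2) unfolding indep_family_def by blast
  then show "\<forall>i\<in>I - {i0}. g i = 0" by (metis G_def Diff_iff singletonI)
qed

text \<open>Steinitz exchange, stated for families because elimination may make two vectors coincide.\<close>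
lemma indep_family_card_le:
  fixes w :: "'j \<Rightarrow> 'r::division_ring^'n" and v :: "'i \<Rightarrow> 'r^'n"
  assumes "finite J" "finite I" "indep_family v I" "v ` I \<subseteq> span_family w J"
  shows "card I \<le> card J"
  using assms
proof (induction J arbitrary: I v rule: finite_induct)
  case empty
  then have "\<forall>i\<in>I. 1 *s v i = 0" by (auto simp: span_family_def)
  then have "(\<Sum>i\<in>I. 1 *s v i) = 0" by (rule sum.neutral)
  then have "I = {}" using empty.prems(2) unfolding indep_family_def by fastforce
  then show ?case by simp
next
  case (insert j J)
  obtain F where F: "\<And>i. i \<in> I \<Longrightarrow> v i = F i j *s w j + (\<Sum>k\<in>J. F i k *s w k)"
  proof -
    have "\<forall>i\<in>I. \<exists>f. v i = (\<Sum>k\<in>insert j J. f k *s w k)"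
      using insert.prems(3) by (auto simp: span_family_def)
    then obtain F where "\<And>i. i \<in> I \<Longrightarrow> v i = (\<Sum>k\<in>insert j J. F i k *s w k)" by metis
    then show thesis using that insert.hyps by simp
  qed
  show ?case
  proof (cases "\<forall>i\<in>I. F i j = 0")
    case True
    then have "v ` I \<subseteq> span_family w J" using F by (auto simp: span_family_def)
    then have "card I \<le> card J" using insert.IH insert.prems(1,2) by blast
    then show ?thesis using insert.hyps by simp
  next
    case False
    then obtain i0 where i0: "i0 \<in> I" "F i0 j \<noteq> 0" by blast
    define d where "d i = F i j * inverse (F i0 j)" for i
    have "v i - d i *s v i0 \<in> span_family w J" if "i \<in> I" for i
    proof -
      have "d i *s (F i0 j *s w j) = F i j *s w j"
        using i0(2) by (simp add: d_def mult.assoc)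
      then have "v i - d i *s v i0 = (\<Sum>k\<in>J. (F i k - d i * F i0 k) *s w k)"
        using F[OF that] F[OF i0(1)]
        by (simp add: sum_subtractf sum_cmul[symmetric])
      then show ?thesis by (rule span_familyI)
    qed
    then have "(\<lambda>i. v i - d i *s v i0) ` (I - {i0}) \<subseteq> span_family w J" by blast
    moreover have "indep_family (\<lambda>i. v i - d i *s v i0) (I - {i0})"
      by (rule indep_family_eliminate[OF insert.prems(1,2) i0(1)])
    ultimately have "card (I - {i0}) \<le> card J" using insert.IH insert.prems(1) by blast
    then show ?thesis using i0(1) insert.prems(1) insert.hyps by (simp add: card_Diff_singleton)
  qed
qed

lemma sum_smult_if_subset:
  fixes f :: "'r::division_ring^'n \<Rightarrow> 'r"
  assumes "finite S" "T \<subseteq> S"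
  shows "(\<Sum>x\<in>S. (if x \<in> T then f x else 0) *s x) = (\<Sum>x\<in>T. f x *s x)"
proof -
  have "(if x \<in> T then f x else 0) *s x = (if x \<in> T then f x *s x else 0)" for x
    by simp
  then show ?thesis using assms by (simp add: sum.inter_restrict[symmetric] Int_absorb1)
qed

lemma lspan_eq_span_family:
  fixes S :: "('r::division_ring^'n) set"
  assumes "finite S"
  shows "lspan S = span_family id S"
proof
  show "lspan S \<subseteq> span_family id S"
  proof
    fix y assume "y \<in> lspan S"
    then obtain T f where "T \<subseteq> S" "y = (\<Sum>x\<in>T. f x *s x)" unfolding lspan_def by blast
    then have "y = (\<Sum>x\<in>S. (if x \<in> T then f x else 0) *s id x)"
      using sum_smult_if_subset[OF assms] by simp
    then show "y \<in> span_family id S" by (rule span_familyI)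
  qed
qed (use assms in \<open>auto simp: span_family_def lspan_def\<close>)

lemma lindep_free_iff_indep_family:
  fixes S :: "('r::division_ring^'n) set"
  assumes "finite S"
  shows "lindep_free S \<longleftrightarrow> indep_family id S"
proof
  assume "lindep_free S"
  then show "indep_family id S" using assms unfolding lindep_free_def indep_family_def by auto
next
  assume indep: "indep_family id S"
  show "lindep_free S" unfolding lindep_free_def
  proof (intro allI impI)
    fix T f assume T: "finite T \<and> T \<subseteq> S \<and> (\<Sum>x\<in>T. f x *s x) = 0"
    then have "(\<Sum>x\<in>S. (if x \<in> T then f x else 0) *s id x) = 0"
      using sum_smult_if_subset[OF assms] by simp
    from indep[unfolded indep_family_def, rule_format, OF this]
    show "\<forall>x\<in>T. f x = 0" using T by (metis subsetD)
  qed
qed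

lemma lindep_free_subset: "lindep_free S \<Longrightarrow> T \<subseteq> S \<Longrightarrow> lindep_free T"
  unfolding lindep_free_def by blast

lemma span_family_axis: "span_family (\<lambda>i. axis i (1::'r::division_ring)) (UNIV::'n::finite set) = UNIV"
proof -
  have "x \<in> span_family (\<lambda>i. axis i 1) UNIV" for x :: "'r^'n"
    by (rule span_familyI[OF basis_expansion[symmetric]])
  then show ?thesis by blast
qed

lemma lindep_free_card_le:
  fixes S :: "('r::division_ring^'n::finite) set"
  assumes "lindep_free S" "finite S"
  shows "card S \<le> CARD('n)"
  using indep_family_card_le[of UNIV S id "\<lambda>i. axis i 1"] assms
  by (simp add: span_family_axis lindep_free_iff_indep_family)

lemma lindep_free_finite:
  fixes S :: "('r::division_ring^'n::finite) set"
  assumes "lindep_free S"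
  shows "finite S"
proof (rule ccontr)
  assume "infinite S"
  then obtain T where T: "finite T" "card T = Suc CARD('n)" "T \<subseteq> S"
    using infinite_arbitrarily_large by blast
  then have "card T \<le> CARD('n)"
    using lindep_free_card_le[OF lindep_free_subset[OF assms T(3)] T(1)] by blast
  with T(2) show False by simp
qed

lemma lsubspace_zero: "lsubspace W \<Longrightarrow> 0 \<in> W"
  unfolding lsubspace_def by blast

lemma lsubspace_add: "lsubspace W \<Longrightarrow> x \<in> W \<Longrightarrow> y \<in> W \<Longrightarrow> x + y \<in> W"
  unfolding lsubspace_def by blast

lemma lsubspace_smult: "lsubspace W \<Longrightarrow> x \<in> W \<Longrightarrow> c *s x \<in> W"
  unfolding lsubspace_def by blast

lemma lsubspace_uminus:
  fixes x :: "'r::division_ring^'n"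
  shows "lsubspace W \<Longrightarrow> x \<in> W \<Longrightarrow> - x \<in> W"
  using lsubspace_smult[of W x "- 1"] by (simp add: vector_sneg_minus1[symmetric])

lemma lsubspace_diff:
  fixes x :: "'r::division_ring^'n"
  shows "lsubspace W \<Longrightarrow> x \<in> W \<Longrightarrow> y \<in> W \<Longrightarrow> x - y \<in> W"
  using lsubspace_add[of W x "- y"] lsubspace_uminus[of W y] by simp

lemma lsubspace_Int: "lsubspace U \<Longrightarrow> lsubspace W \<Longrightarrow> lsubspace (U \<inter> W)"
  unfolding lsubspace_def by blast

lemma lsubspace_sum: "lsubspace W \<Longrightarrow> (\<And>x. x \<in> T \<Longrightarrow> g x \<in> W) \<Longrightarrow> sum g T \<in> W"
  by (induction T rule: infinite_finite_induct) (auto simp: lsubspace_zero lsubspace_add)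

lemma lspan_subset: "lsubspace W \<Longrightarrow> S \<subseteq> W \<Longrightarrow> lspan S \<subseteq> W"
  unfolding lspan_def by (auto intro!: lsubspace_sum lsubspace_smult)

lemma lspanI: "finite T \<Longrightarrow> T \<subseteq> S \<Longrightarrow> y = (\<Sum>x\<in>T. f x *s x) \<Longrightarrow> y \<in> lspan S"
  unfolding lspan_def by blast

lemma lspan_superset: "S \<subseteq> lspan S"
proof
  fix x assume "x \<in> S"
  then show "x \<in> lspan S" by (intro lspanI[of "{x}" S x "\<lambda>_. 1"]) simp_all
qed

lemma lspan_insertE:
  fixes x :: "'r::division_ring^'n"
  assumes "finite S" "x \<notin> S" "y \<in> lspan (insert x S)"
  obtains c where "y - c *s x \<in> lspan S"
proof -
  obtain f where "y = (\<Sum>k\<in>insert x S. f k *s k)"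
    using assms(1,3) by (auto simp: lspan_eq_span_family span_family_def)
  then have "y - f x *s x = (\<Sum>k\<in>S. f k *s id k)" using assms(1,2) by simp
  then have "y - f x *s x \<in> span_family id S" by (rule span_familyI)
  then show thesis using that assms(1) by (simp add: lspan_eq_span_family)
qed

lemma lindep_free_insert:
  fixes x :: "'r::division_ring^'n"
  assumes "finite S" "lindep_free S" "x \<notin> lspan S"
  shows "lindep_free (insert x S)"
proof -
  have xS: "x \<notin> S" using assms(3) lspan_superset by blast
  have "indep_family id (insert x S)" unfolding indep_family_def
  proof (intro allI impI)
    fix g assume "(\<Sum>k\<in>insert x S. g k *s id k) = 0"
    then have sum0: "g x *s x + (\<Sum>k\<in>S. g k *s k) = 0" using xS assms(1) by simp
    have gx: "g x = 0"
    proof (rule ccontr)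
      assume "g x \<noteq> 0"
      then have "x = (\<Sum>k\<in>S. (- (inverse (g x) * g k)) *s id k)"
        using arg_cong[OF sum0, of "\<lambda>v. inverse (g x) *s v"]
        by (simp add: sum_cmul[symmetric] eq_neg_iff_add_eq_0 sum_negf vector_smult_lneg)
      then have "x \<in> lspan S" by (simp add: lspan_eq_span_family[OF assms(1)] span_familyI)
      with assms(3) show False ..
    qed
    then have "(\<Sum>k\<in>S. g k *s id k) = 0" using sum0 by simp
    then have "\<forall>k\<in>S. g k = 0"
      using assms(1,2) by (simp add: lindep_free_iff_indep_family indep_family_def)
    with gx show "\<forall>k\<in>insert x S. g k = 0" by simp
  qed
  then show ?thesis using assms(1) by (simp add: lindep_free_iff_indep_family)
qed

lemma lbasis_exists:
  fixes W :: "('r::division_ring^'n::finite) set"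
  assumes W: "lsubspace W"
  obtains B where "lbasis W B" "finite B"
proof -
  let ?indep = "\<lambda>k. \<exists>S. S \<subseteq> W \<and> lindep_free S \<and> card S = k"
  have indep0: "?indep 0" by (rule exI[of _ "{}"]) (simp add: lindep_free_def)
  have bounded: "\<forall>k. ?indep k \<longrightarrow> k \<le> CARD('n)"
    using lindep_free_card_le lindep_free_finite by blast
  obtain k where k: "?indep k" "\<forall>k'. ?indep k' \<longrightarrow> k' \<le> k"
    using Nat.ex_has_greatest_nat[OF indep0 bounded] by blast
  then obtain S where S: "S \<subseteq> W" "lindep_free S" "card S = k" by blast
  have fin: "finite S" using S(2) lindep_free_finite by blast
  have "W \<subseteq> lspan S"
  proof
    fix x assume x: "x \<in> W"
    show "x \<in> lspan S"
    proof (rule ccontr)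
      assume "x \<notin> lspan S"
      then have "lindep_free (insert x S)" "x \<notin> S"
        using lindep_free_insert[OF fin S(2)] lspan_superset by blast+
      moreover have "insert x S \<subseteq> W" using x S(1) by blast
      ultimately have "card (insert x S) \<le> k" using k(2) by blast
      with \<open>x \<notin> S\<close> fin S(3) show False by simp
    qed
  qed
  then have "lbasis W S" using lspan_subset[OF W S(1)] S unfolding lbasis_def by blast
  then show thesis using fin by (rule that)
qed

lemma card_le_card_lbasis:
  fixes B :: "('r::division_ring^'n::finite) set"
  assumes "lbasis W B" "S \<subseteq> W" "lindep_free S"
  shows "card S \<le> card B"
proof -
  have fin: "finite B" "finite S" using assms lindep_free_finite unfolding lbasis_def by blast+
  have "id ` S \<subseteq> span_family id B"
    using assms lspan_eq_span_family[OF fin(1)] unfolding lbasis_def by auto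
  then show ?thesis
    using indep_family_card_le[OF fin] assms(3) lindep_free_iff_indep_family[OF fin(2)] by blast
qed

lemma ldim_eq_card_lbasis:
  fixes B :: "('r::division_ring^'n::finite) set"
  assumes "lbasis W B"
  shows "ldim W = card B"
proof -
  have B': "lbasis W (SOME B. lbasis W B)" using assms by (rule someI)
  show ?thesis
    using card_le_card_lbasis[OF B'] card_le_card_lbasis[OF assms] assms B'
    unfolding ldim_def lbasis_def by (simp add: le_antisym)
qed

lemma card_le_ldim:
  fixes W :: "('r::division_ring^'n::finite) set"
  assumes "lsubspace W" "S \<subseteq> W" "lindep_free S"
  shows "card S \<le> ldim W"
  using lbasis_exists[OF assms(1)] card_le_card_lbasis assms ldim_eq_card_lbasis by metis

lemma ldim_le_card:
  fixes W :: "('r::division_ring^'n::finite) set"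
  assumes "lsubspace W"
  shows "ldim W \<le> CARD('n)"
  using lbasis_exists[OF assms] lindep_free_card_le ldim_eq_card_lbasis unfolding lbasis_def by metis

lemma ldim_eq_1:
  fixes w :: "'r::division_ring^'n::finite"
  assumes "lsubspace L" "w \<in> L" "w \<noteq> 0" "\<And>y. y \<in> L \<Longrightarrow> \<exists>c. y = c *s w"
  shows "ldim L = 1"
proof -
  have "lindep_free {w}"
    using assms(3) by (auto simp: lindep_free_def smult_eq_0_iff subset_singleton_iff)
  moreover have "L \<subseteq> lspan {w}"
  proof
    fix y assume "y \<in> L"
    then obtain c where "y = c *s w" using assms(4) by blast
    then show "y \<in> lspan {w}" by (intro lspanI[of "{w}" _ _ "\<lambda>_. c"]) simp_all
  qed
  ultimately have "lbasis L {w}"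
    using lspan_subset[OF assms(1)] assms(2) unfolding lbasis_def by blast
  then show ?thesis by (simp add: ldim_eq_card_lbasis)
qed

lemma codim_one_decomp:
  fixes W U :: "('r::division_ring^'n::finite) set"
  assumes "lsubspace W" "lsubspace U" "W \<subseteq> U" "ldim U = Suc (ldim W)"
    and "w \<in> U" "w \<notin> W" "y \<in> U"
  obtains c where "y - c *s w \<in> W"
proof -
  obtain BW where BW: "lbasis W BW" "finite BW" using lbasis_exists[OF assms(1)] .
  have span: "lspan BW = W" and "BW \<subseteq> W" using BW(1) unfolding lbasis_def by blast+
  then have "w \<notin> BW" using assms(6) by blast
  have indep_w: "lindep_free (insert w BW)"
    using lindep_free_insert[OF BW(2)] BW(1) assms(6) span unfolding lbasis_def by blast
  have "\<exists>c. y - c *s w \<in> W"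
  proof (rule ccontr)
    assume no_c: "\<nexists>c. y - c *s w \<in> W"
    have "y \<notin> lspan (insert w BW)"
    proof
      assume "y \<in> lspan (insert w BW)"
      then obtain c where "y - c *s w \<in> lspan BW" by (rule lspan_insertE[OF BW(2) \<open>w \<notin> BW\<close>])
      with no_c span show False by blast
    qed
    then have "lindep_free (insert y (insert w BW))" "y \<notin> insert w BW"
      using lindep_free_insert[OF _ indep_w] BW(2) lspan_superset by blast+
    moreover have "insert y (insert w BW) \<subseteq> U" using assms(3,5,7) \<open>BW \<subseteq> W\<close> by blast
    ultimately have "card (insert y (insert w BW)) \<le> ldim U" using card_le_ldim[OF assms(2)] by blast
    moreover have "card (insert y (insert w BW)) = ldim W + 2"
      using \<open>y \<notin> insert w BW\<close> \<open>w \<notin> BW\<close> BW(2) ldim_eq_card_lbasis[OF BW(1)] by simp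
    ultimately show False using assms(4) by simp
  qed
  then show thesis using that by blast
qed

lemma is_flag_lsubspace: "is_flag F \<Longrightarrow> i \<le> CARD('n) \<Longrightarrow> lsubspace (F i)"
  for F :: "nat \<Rightarrow> ('r::division_ring^'n::finite) set"
  unfolding is_flag_def by blast

lemma is_flag_ldim:
  fixes F :: "nat \<Rightarrow> ('r::division_ring^'n::finite) set"
  assumes "is_flag F" "i \<le> CARD('n)"
  shows "ldim (F i) = CARD('n) - i"
  using assms ldim_le_card[of "F i"] unfolding is_flag_def lcodim_def by auto

lemma is_flag_antimono:
  fixes F :: "nat \<Rightarrow> ('r::division_ring^'n::finite) set"
  assumes "is_flag F" "i \<le> j" "j \<le> CARD('n)"
  shows "F j \<subseteq> F i"
  using assms(2)
proof (induction j rule: dec_induct)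
  case (step k)
  then have "F (Suc k) \<subseteq> F k" using assms(1,3) unfolding is_flag_def by simp
  with step.IH show ?case by blast
qed simp

lemma coset_eq_iff:
  fixes x :: "'r::division_ring^'n"
  assumes W: "lsubspace W"
  shows "coset W x = coset W y \<longleftrightarrow> x - y \<in> W"
proof
  assume "coset W x = coset W y"
  then have "x + 0 \<in> coset W y" using lsubspace_zero[OF W] unfolding coset_def by blast
  then obtain w where "w \<in> W" "x = y + w" unfolding coset_def by auto
  then show "x - y \<in> W" by simp
next
  have sub: "coset W x \<subseteq> coset W y" if "x - y \<in> W" for x y
  proof
    fix u assume "u \<in> coset W x"
    then obtain w where "w \<in> W" "u = y + ((x - y) + w)" unfolding coset_def by auto
    then show "u \<in> coset W y" using lsubspace_add[OF W that] unfolding coset_def by blast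
  qed
  assume "x - y \<in> W"
  moreover have "y - x \<in> W" using lsubspace_uminus[OF W \<open>x - y \<in> W\<close>] by simp
  ultimately show "coset W x = coset W y" using sub by blast
qed

text \<open>The injectivity and surjectivity halves of genericity, in a form that is visibly
  invariant under rotating the three flags.\<close>
definition transverse ::
  "(nat \<Rightarrow> ('r::division_ring ^ 'n::finite) set) \<Rightarrow> (nat \<Rightarrow> ('r ^ 'n) set) \<Rightarrow> (nat \<Rightarrow> ('r ^ 'n) set) \<Rightarrow> bool"
  where
  "transverse A B C \<longleftrightarrow> is_flag A \<and> is_flag B \<and> is_flag C \<and>
     (\<forall>a b c. a + b + c = CARD('n) \<longrightarrow>
        A a \<inter> B b \<inter> C c \<subseteq> {0} \<and> (\<forall>x y z. \<exists>v. v - x \<in> A a \<and> v - y \<in> B b \<and> v - z \<in> C c))"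

lemma transverse_rotate:
  fixes A B C :: "nat \<Rightarrow> ('r::division_ring ^ 'n::finite) set"
  assumes "transverse A B C"
  shows "transverse B C A"
proof -
  have "B b \<inter> C c \<inter> A a \<subseteq> {0} \<and> (\<forall>y z x. \<exists>v. v - y \<in> B b \<and> v - z \<in> C c \<and> v - x \<in> A a)"
    if "b + c + a = CARD('n)" for a b c
  proof -
    have "a + b + c = CARD('n)" using that by simp
    then have Int: "A a \<inter> B b \<inter> C c \<subseteq> {0}"
      and solve: "\<forall>x y z. \<exists>v. v - x \<in> A a \<and> v - y \<in> B b \<and> v - z \<in> C c"
      using assms unfolding transverse_def by blast+
    show ?thesis
    proof (intro conjI allI)
      show "B b \<inter> C c \<inter> A a \<subseteq> {0}" using Int by blast
      fix y z x
      from solve obtain v where "v - x \<in> A a" "v - y \<in> B b" "v - z \<in> C c" by blast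
      then show "\<exists>v. v - y \<in> B b \<and> v - z \<in> C c \<and> v - x \<in> A a" by blast
    qed
  qed
  then show ?thesis using assms unfolding transverse_def by blast
qed

lemma generic_triple_imp_transverse:
  fixes A B C :: "nat \<Rightarrow> ('r::division_ring ^ 'n::finite) set"
  assumes "generic_triple A B C"
  shows "transverse A B C"
  unfolding transverse_def
proof (intro conjI allI impI)
  show flags: "is_flag A" "is_flag B" "is_flag C" using assms unfolding generic_triple_def by auto
  fix a b c assume abc: "a + b + c = CARD('n)"
  define f where "f v = (coset (A a) v, coset (B b) v, coset (C c) v)" for v
  have bij: "bij_betw f UNIV (quot UNIV (A a) \<times> quot UNIV (B b) \<times> quot UNIV (C c))"
    using assms abc unfolding generic_triple_def f_def by blast
  have subspaces: "lsubspace (A a)" "lsubspace (B b)" "lsubspace (C c)"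
    using flags abc by (auto intro: is_flag_lsubspace)
  show "A a \<inter> B b \<inter> C c \<subseteq> {0}"
  proof
    fix x assume "x \<in> A a \<inter> B b \<inter> C c"
    then have "f x = f 0" using subspaces by (simp add: f_def coset_eq_iff)
    then show "x \<in> {0}" using bij_betw_imp_inj_on[OF bij] by (simp add: inj_on_def)
  qed
  fix x y z
  have "(coset (A a) x, coset (B b) y, coset (C c) z) \<in> f ` UNIV"
    using bij_betw_imp_surj_on[OF bij] unfolding quot_def by blast
  then obtain v where "f v = (coset (A a) x, coset (B b) y, coset (C c) z)" by auto
  then show "\<exists>v. v - x \<in> A a \<and> v - y \<in> B b \<and> v - z \<in> C c"
    using subspaces by (auto simp: f_def coset_eq_iff)
qed

lemma transverse_Int_zero:
  fixes A B C :: "nat \<Rightarrow> ('r::division_ring ^ 'n::finite) set"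
  assumes "transverse A B C" "a + b + c = CARD('n)" "x \<in> A a" "x \<in> B b" "x \<in> C c"
  shows "x = 0"
  using assms unfolding transverse_def by blast

lemma transverse_solve:
  fixes A B C :: "nat \<Rightarrow> ('r::division_ring ^ 'n::finite) set"
  assumes "transverse A B C" "a + b + c = CARD('n)"
  obtains v where "v - x \<in> A a" "v - y \<in> B b" "v - z \<in> C c"
  using assms unfolding transverse_def by blast

lemma transverse_lsubspace:
  fixes A B C :: "nat \<Rightarrow> ('r::division_ring ^ 'n::finite) set"
  assumes "transverse A B C" "i \<le> CARD('n)"
  shows "lsubspace (A i)" "lsubspace (B i)" "lsubspace (C i)"
  using assms is_flag_lsubspace unfolding transverse_def by blast+

lemma tline_rotate: "tline A B C a b c = tline B C A b c a"
  unfolding tline_def by blast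

lemma tline_lsubspace:
  fixes A B C :: "nat \<Rightarrow> ('r::division_ring ^ 'n::finite) set"
  assumes "transverse A B C" "1 \<le> b" "1 \<le> c" "a + b + c = CARD('n) + 2"
  shows "lsubspace (tline A B C a b c)"
proof -
  have "a - 1 \<le> CARD('n)" "b - 1 \<le> CARD('n)" "c - 1 \<le> CARD('n)" using assms(2-4) by linarith+
  then show ?thesis
    using transverse_lsubspace[OF assms(1)] unfolding tline_def by (simp add: lsubspace_Int)
qed

lemma transverse_tline_Int_zero:
  fixes A B C :: "nat \<Rightarrow> ('r::division_ring ^ 'n::finite) set"
  assumes "transverse A B C" "1 \<le> b" "1 \<le> c" "a + b + c = CARD('n) + 2"
    and "x \<in> tline A B C a b c" "x \<in> A a"
  shows "x = 0"
  using transverse_Int_zero[OF assms(1), of a "b - 1" "c - 1"] assms(2-6) unfolding tline_def by simp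

lemma transverse_tline_lift:
  fixes A B C :: "nat \<Rightarrow> ('r::division_ring ^ 'n::finite) set"
  assumes "transverse A B C" "1 \<le> a" "1 \<le> b" "1 \<le> c" "a + b + c = CARD('n) + 2"
    and "u \<in> A (a - 1)"
  obtains l where "l \<in> tline A B C a b c" "l - u \<in> A a"
proof -
  have "a + (b - 1) + (c - 1) = CARD('n)" using assms(3-5) by simp
  then obtain v where v: "v - u \<in> A a" "v \<in> B (b - 1)" "v \<in> C (c - 1)"
    using transverse_solve[OF assms(1), of a "b - 1" "c - 1" u 0 0] by auto
  have flag: "is_flag A" using assms(1) unfolding transverse_def by blast
  have "A a \<subseteq> A (a - 1)" using is_flag_antimono[OF flag] assms(3-5) by simp
  moreover have "lsubspace (A (a - 1))" using is_flag_lsubspace[OF flag] assms(3-5) by simp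
  ultimately have "u + (v - u) \<in> A (a - 1)" using lsubspace_add assms(6) v(1) by blast
  then show thesis using that v unfolding tline_def by simp
qed

lemma transverse_coset_bij_tline:
  fixes A B C :: "nat \<Rightarrow> ('r::division_ring ^ 'n::finite) set"
  assumes "transverse A B C" "1 \<le> a" "1 \<le> b" "1 \<le> c" "a + b + c = CARD('n) + 2"
  shows "bij_betw (coset (A a)) (tline A B C a b c) (gr A a)"
proof (rule bij_betw_imageI)
  have "a \<le> CARD('n)" using assms(3-5) by simp
  then have Aa: "lsubspace (A a)" by (rule transverse_lsubspace[OF assms(1)])
  have L: "lsubspace (tline A B C a b c)" using tline_lsubspace assms by blast
  show "inj_on (coset (A a)) (tline A B C a b c)"
  proof (rule inj_onI)
    fix x y assume "x \<in> tline A B C a b c" "y \<in> tline A B C a b c" "coset (A a) x = coset (A a) y"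
    then have "x - y = 0"
      using transverse_tline_Int_zero[OF assms(1,3-5)] lsubspace_diff[OF L] coset_eq_iff[OF Aa] by blast
    then show "x = y" by simp
  qed
  show "coset (A a) ` tline A B C a b c = gr A a"
  proof
    show "coset (A a) ` tline A B C a b c \<subseteq> gr A a"
      unfolding gr_def quot_def tline_def by blast
    show "gr A a \<subseteq> coset (A a) ` tline A B C a b c"
    proof
      fix X assume "X \<in> gr A a"
      then obtain u where u: "u \<in> A (a - 1)" "X = coset (A a) u" unfolding gr_def quot_def by blast
      then obtain l where "l \<in> tline A B C a b c" "l - u \<in> A a"
        using transverse_tline_lift[OF assms] by blast
      then show "X \<in> coset (A a) ` tline A B C a b c" using u(2) coset_eq_iff[OF Aa] by auto
    qed
  qed
qed

lemma transverse_coset_bij_tline_all: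
  fixes A B C :: "nat \<Rightarrow> ('r::division_ring ^ 'n::finite) set"
  assumes "transverse A B C" "1 \<le> a" "1 \<le> b" "1 \<le> c" "a + b + c = CARD('n) + 2"
  shows "bij_betw (coset (A a)) (tline A B C a b c) (gr A a)"
    and "bij_betw (coset (B b)) (tline A B C a b c) (gr B b)"
    and "bij_betw (coset (C c)) (tline A B C a b c) (gr C c)"
proof -
  have BCA: "transverse B C A" and CAB: "transverse C A B"
    using transverse_rotate assms(1) by blast+
  show "bij_betw (coset (A a)) (tline A B C a b c) (gr A a)"
    using transverse_coset_bij_tline[OF assms] .
  show "bij_betw (coset (B b)) (tline A B C a b c) (gr B b)"
    unfolding tline_rotate[of A B C] using transverse_coset_bij_tline[OF BCA, of b c a] assms(2-5)
    by simp
  show "bij_betw (coset (C c)) (tline A B C a b c) (gr C c)"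
    unfolding tline_rotate[of A B C] tline_rotate[of B C A]
    using transverse_coset_bij_tline[OF CAB, of c a b] assms(2-5) by simp
qed

lemma transverse_ldim_tline:
  fixes A B C :: "nat \<Rightarrow> ('r::division_ring ^ 'n::finite) set"
  assumes "transverse A B C" "1 \<le> a" "1 \<le> b" "1 \<le> c" "a + b + c = CARD('n) + 2"
  shows "ldim (tline A B C a b c) = 1"
proof -
  let ?L = "tline A B C a b c"
  have flag: "is_flag A" using assms(1) unfolding transverse_def by blast
  have sub: "lsubspace (A a)" "lsubspace (A (a - 1))" "A a \<subseteq> A (a - 1)"
    using is_flag_lsubspace[OF flag] is_flag_antimono[OF flag] assms(3-5) by auto
  have dim: "ldim (A (a - 1)) = Suc (ldim (A a))"
    using is_flag_ldim[OF flag] assms(2-5) by simp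
  then have "A (a - 1) \<noteq> A a" by auto
  then obtain v where v: "v \<in> A (a - 1)" "v \<notin> A a" using sub(3) by blast
  then obtain w where w: "w \<in> ?L" "w - v \<in> A a" using transverse_tline_lift[OF assms] by blast
  have "w \<notin> A a" using lsubspace_diff[OF sub(1), of w "w - v"] w(2) v(2) by auto
  have L: "lsubspace ?L" using tline_lsubspace assms by blast
  have "w \<in> A (a - 1)" using w(1) unfolding tline_def by blast
  have "\<exists>c. y = c *s w" if y: "y \<in> ?L" for y
  proof -
    have "y \<in> A (a - 1)" using y unfolding tline_def by blast
    then obtain c where c: "y - c *s w \<in> A a"
      using codim_one_decomp[OF sub(1,2,3) dim \<open>w \<in> A (a - 1)\<close> \<open>w \<notin> A a\<close>] by blast
    have "y - c *s w \<in> ?L" using lsubspace_diff[OF L y lsubspace_smult[OF L w(1)]] .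
    then have "y - c *s w = 0" using transverse_tline_Int_zero[OF assms(1,3-5)] c by blast
    then show ?thesis by auto
  qed
  moreover have "w \<noteq> 0" using \<open>w \<notin> A a\<close> lsubspace_zero[OF sub(1)] by blast
  ultimately show ?thesis using ldim_eq_1[OF L w(1)] by blast
qed

lemma can_iso_coset:
  assumes "bij_betw (coset (F i)) L (gr F i)" "l \<in> L"
  shows "can_iso L F i G j (coset (F i) l) = coset (G j) l"
proof -
  have "(THE l'. l' \<in> L \<and> coset (F i) l' = coset (F i) l) = l"
    using bij_betw_imp_inj_on[OF assms(1)] assms(2) by (intro the_equality) (auto simp: inj_on_def)
  then show ?thesis unfolding can_iso_def by simp
qed

lemma can_iso_lift:
  assumes "lsubspace (F i)" "bij_betw (coset (F i)) L (gr F i)" "y \<in> F (i - 1)"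
  obtains l where "l \<in> L" "l - y \<in> F i" "can_iso L F i G j (coset (F i) y) = coset (G j) l"
proof -
  have "coset (F i) y \<in> gr F i" using assms(3) unfolding gr_def quot_def by blast
  then obtain l where l: "l \<in> L" "coset (F i) l = coset (F i) y"
    using bij_betw_imp_surj_on[OF assms(2)] by (metis imageE)
  moreover have "l - y \<in> F i" using l(2) coset_eq_iff[OF assms(1)] by blast
  moreover have "can_iso L F i G j (coset (F i) y) = coset (G j) l"
    using can_iso_coset[OF assms(2) l(1)] l(2) by simp
  ultimately show thesis using that by blast
qed

lemma can_iso_triangle:
  fixes A B C :: "nat \<Rightarrow> ('r::division_ring ^ 'n::finite) set"
  assumes "transverse A B C" "1 \<le> a" "1 \<le> b" "1 \<le> c" "a + b + c = CARD('n) + 2"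
    and "x \<in> A (a - 1)"
  shows "can_iso (tline A B C a b c) C c A a
           (can_iso (tline A B C a b c) B b C c
             (can_iso (tline A B C a b c) A a B b (coset (A a) x)))
         = coset (A a) x"
proof -
  note bij = transverse_coset_bij_tline_all[OF assms(1-5)]
  have "a \<le> CARD('n)" using assms(3-5) by simp
  then have Aa: "lsubspace (A a)" by (rule transverse_lsubspace[OF assms(1)])
  obtain l where l: "l \<in> tline A B C a b c" "l - x \<in> A a"
    "can_iso (tline A B C a b c) A a B b (coset (A a) x) = coset (B b) l"
    using can_iso_lift[OF Aa bij(1) assms(6)] .
  then show ?thesis
    using can_iso_coset[OF bij(2) l(1)] can_iso_coset[OF bij(3) l(1)] coset_eq_iff[OF Aa] by simp
qed

lemma transverse_hexagon_lifts:
  fixes A B C :: "nat \<Rightarrow> ('r::division_ring ^ 'n::finite) set"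
  assumes T: "transverse A B C" and "2 \<le> a" "2 \<le> b" "2 \<le> c" "a + b + c = CARD('n) + 4"
    and "l1 \<in> tline A B C a (b - 1) (c - 1)" "l2 \<in> tline A B C (a - 1) (b - 1) c"
    and "l3 \<in> tline A B C (a - 1) b (c - 1)" "l4 \<in> tline A B C a (b - 1) (c - 1)"
    and "l2 - l1 \<in> B (b - 1)" "l3 - l2 \<in> A (a - 1)" "l4 - l3 \<in> C (c - 1)"
  shows "l4 = - l1"
proof -
  have "\<exists>k. n = Suc (Suc k)" if "2 \<le> n" for n :: nat using that by presburger
  then obtain p q r where pqr: "a = Suc (Suc p)" "b = Suc (Suc q)" "c = Suc (Suc r)"
    using assms(2-4) by meson
  have m: "Suc p + Suc q + r = CARD('n)" "Suc p + q + Suc r = CARD('n)" using assms(5) pqr by simp_all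
  have l1: "l1 \<in> A (Suc p)" "l1 \<in> B q" "l1 \<in> C r"
    and l2: "l2 \<in> B q" "l2 \<in> C (Suc r)"
    and l3: "l3 \<in> B (Suc q)" "l3 \<in> C r"
    and l4: "l4 \<in> A (Suc p)" "l4 \<in> B q"
    and d: "l2 - l1 \<in> B (Suc q)" "l3 - l2 \<in> A (Suc p)" "l4 - l3 \<in> C (Suc r)"
    using assms(6-12) unfolding pqr tline_def by auto
  have sub: "lsubspace (A (Suc p))" "lsubspace (B (Suc q))" "lsubspace (B q)"
      "lsubspace (C (Suc r))" "lsubspace (C r)"
    using transverse_lsubspace[OF T] m by simp_all
  have "is_flag C" using T unfolding transverse_def by blast
  then have "C (Suc r) \<subseteq> C r" using is_flag_antimono[of C r "Suc r"] m(2) by simp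
  have "l1 + (l3 - l2) = 0"
  proof (rule transverse_Int_zero[OF T m(1)])
    show "l1 + (l3 - l2) \<in> A (Suc p)" using lsubspace_add[OF sub(1) l1(1) d(2)] .
    have "l3 - (l2 - l1) \<in> B (Suc q)" using lsubspace_diff[OF sub(2) l3(1) d(1)] .
    then show "l1 + (l3 - l2) \<in> B (Suc q)" by (simp add: algebra_simps)
    have "l2 \<in> C r" using l2(2) \<open>C (Suc r) \<subseteq> C r\<close> by blast
    then show "l1 + (l3 - l2) \<in> C r" using lsubspace_add lsubspace_diff sub(5) l1(3) l3(2) by metis
  qed
  then have sum_eq: "l4 + l1 = (l4 - l3) + l2" by (simp add: algebra_simps)
  have "l4 + l1 = 0"
  proof (rule transverse_Int_zero[OF T m(2)])
    show "l4 + l1 \<in> A (Suc p)" using lsubspace_add[OF sub(1) l4(1) l1(1)] .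
    show "l4 + l1 \<in> B q" using lsubspace_add[OF sub(3) l4(2) l1(2)] .
    show "l4 + l1 \<in> C (Suc r)"
      unfolding sum_eq by (rule lsubspace_add[OF sub(4) d(3) l2(2)])
  qed
  then show ?thesis by (simp add: add_eq_0_iff)
qed

lemma can_iso_hexagon:
  fixes A B C :: "nat \<Rightarrow> ('r::division_ring ^ 'n::finite) set"
  assumes T: "transverse A B C" and abc: "2 \<le> a" "2 \<le> b" "2 \<le> c" "a + b + c = CARD('n) + 4"
    and x: "x \<in> A (a - 1)"
  shows "can_iso (tline A B C a (b - 1) (c - 1)) C (c - 1) A a
          (can_iso (tline A B C (a - 1) b (c - 1)) B b C (c - 1)
           (can_iso (tline A B C (a - 1) b (c - 1)) A (a - 1) B b
            (can_iso (tline A B C (a - 1) (b - 1) c) C c A (a - 1)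
             (can_iso (tline A B C (a - 1) (b - 1) c) B (b - 1) C c
              (can_iso (tline A B C a (b - 1) (c - 1)) A a B (b - 1) (coset (A a) x))))))
         = coset (A a) (- x)"
proof -
  let ?L1 = "tline A B C a (b - 1) (c - 1)"
  let ?L2 = "tline A B C (a - 1) (b - 1) c"
  let ?L3 = "tline A B C (a - 1) b (c - 1)"
  have "1 \<le> a" "1 \<le> b - 1" "1 \<le> c - 1" "a + (b - 1) + (c - 1) = CARD('n) + 2"
    using abc by auto
  note bij1 = transverse_coset_bij_tline_all[OF T this]
  have "1 \<le> a - 1" "1 \<le> b - 1" "1 \<le> c" "(a - 1) + (b - 1) + c = CARD('n) + 2"
    using abc by auto
  note bij2 = transverse_coset_bij_tline_all[OF T this]
  have "1 \<le> a - 1" "1 \<le> b" "1 \<le> c - 1" "(a - 1) + b + (c - 1) = CARD('n) + 2"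
    using abc by auto
  note bij3 = transverse_coset_bij_tline_all[OF T this]
  have sub: "lsubspace (A a)" "lsubspace (A (a - 1))" "lsubspace (B (b - 1))" "lsubspace (C (c - 1))"
    using transverse_lsubspace[OF T] abc by simp_all
  obtain l1 where l1: "l1 \<in> ?L1" "l1 - x \<in> A a"
    "can_iso ?L1 A a B (b - 1) (coset (A a) x) = coset (B (b - 1)) l1"
    using can_iso_lift[OF sub(1) bij1(1) x] .
  have "l1 \<in> B (b - 1 - 1)" using l1(1) unfolding tline_def by blast
  then obtain l2 where l2: "l2 \<in> ?L2" "l2 - l1 \<in> B (b - 1)"
    "can_iso ?L2 B (b - 1) C c (coset (B (b - 1)) l1) = coset (C c) l2"
    using can_iso_lift[OF sub(3) bij2(2)] by blast
  have "l2 \<in> A (a - 1 - 1)" using l2(1) unfolding tline_def by blast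
  then obtain l3 where l3: "l3 \<in> ?L3" "l3 - l2 \<in> A (a - 1)"
    "can_iso ?L3 A (a - 1) B b (coset (A (a - 1)) l2) = coset (B b) l3"
    using can_iso_lift[OF sub(2) bij3(1)] by blast
  have "l3 \<in> C (c - 1 - 1)" using l3(1) unfolding tline_def by blast
  then obtain l4 where l4: "l4 \<in> ?L1" "l4 - l3 \<in> C (c - 1)"
    "can_iso ?L1 C (c - 1) A a (coset (C (c - 1)) l3) = coset (A a) l4"
    using can_iso_lift[OF sub(4) bij1(3)] by blast
  have "l4 = - l1"
    using transverse_hexagon_lifts[OF T abc l1(1) l2(1) l3(1) l4(1) l2(2) l3(2) l4(2)] .
  then have "coset (A a) l4 = coset (A a) (- x)"
    using coset_eq_iff[OF sub(1)] lsubspace_uminus[OF sub(1) l1(2)] by (simp add: algebra_simps)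
  moreover have "can_iso ?L2 C c A (a - 1) (coset (C c) l2) = coset (A (a - 1)) l2"
    by (rule can_iso_coset[OF bij2(3) l2(1)])
  moreover have "can_iso ?L3 B b C (c - 1) (coset (B b) l3) = coset (C (c - 1)) l3"
    by (rule can_iso_coset[OF bij3(2) l3(1)])
  ultimately show ?thesis using l1(3) l2(3) l3(3) l4(3) by simp
qed

theorem lemma2p3:
  fixes A B C :: "nat \<Rightarrow> ('r::division_ring ^ 'n::finite) set"
  assumes gen: "generic_triple A B C"
  shows
   "(\<forall>a b c. 1 \<le> a \<and> 1 \<le> b \<and> 1 \<le> c \<and> a + b + c = CARD('n) + 2 \<longrightarrow>
       lsubspace (tline A B C a b c) \<and> ldim (tline A B C a b c) = 1 \<and>
       bij_betw (coset (A a)) (tline A B C a b c) (gr A a) \<and>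
       bij_betw (coset (B b)) (tline A B C a b c) (gr B b) \<and>
       bij_betw (coset (C c)) (tline A B C a b c) (gr C c))
  \<and> (\<forall>a b c. 1 \<le> a \<and> 1 \<le> b \<and> 1 \<le> c \<and> a + b + c = CARD('n) + 2 \<longrightarrow>
       (\<forall>x\<in>A (a - 1).
          can_iso (tline A B C a b c) C c A a
            (can_iso (tline A B C a b c) B b C c
              (can_iso (tline A B C a b c) A a B b (coset (A a) x)))
          = coset (A a) x))
  \<and> (\<forall>a b c. 2 \<le> a \<and> 2 \<le> b \<and> 2 \<le> c \<and> a + b + c = CARD('n) + 4 \<longrightarrow>
       (\<forall>x\<in>A (a - 1).
          can_iso (tline A B C a (b - 1) (c - 1)) C (c - 1) A a
           (can_iso (tline A B C (a - 1) b (c - 1)) B b C (c - 1)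
            (can_iso (tline A B C (a - 1) b (c - 1)) A (a - 1) B b
             (can_iso (tline A B C (a - 1) (b - 1) c) C c A (a - 1)
              (can_iso (tline A B C (a - 1) (b - 1) c) B (b - 1) C c
               (can_iso (tline A B C a (b - 1) (c - 1)) A a B (b - 1) (coset (A a) x))))))
          = coset (A a) (- x)))"
proof -
  have T: "transverse A B C" using generic_triple_imp_transverse[OF gen] .
  show ?thesis
    using tline_lsubspace[OF T] transverse_ldim_tline[OF T] transverse_coset_bij_tline_all[OF T]
      can_iso_triangle[OF T] can_iso_hexagon[OF T]
    by simp
qed

end
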